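(* Let $T>0$ and let $\theta:[0,T]\to[0,+\infty)$ be a continuous non-increasing function such that, for some integer $m\ge1$ and some constant $c>0$, $\theta^{2m-1}(t_1)\big(\theta(t_2)-\theta(t_1)\big)\le -c(t_2-t_1)\theta^{2m}(t_2)$ for all $0\le t_1\le t_2\le T$. Then $\theta(t)\le e^{-ct}\theta(0)$ for all $t\in[0,T]$. *)

theory Defs
  imports "HOL-Analysis.Analysis"
begin

end

theory Submission imports Defs begin

text \<open>Put \<open>L s = ln (\<theta> s) + c s\<close>. Since \<open>ln b - ln a \<le> (b - a) / a\<close>, the hypothesis gives
  \<open>L t\<^sub>2 - L t\<^sub>1 \<le> c (t\<^sub>2 - t\<^sub>1) (1 - (\<theta> t\<^sub>2 / \<theta> t\<^sub>1)\<^sup>2\<^sup>m)\<close>, and by uniform continuity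
  the ratio \<open>\<theta> t\<^sub>2 / \<theta> t\<^sub>1\<close> is close to 1 when \<open>t\<^sub>2 - t\<^sub>1\<close> is small. Chaining such short
  steps shows \<open>L t - L 0 \<le> \<epsilon> t\<close> for every \<open>\<epsilon> > 0\<close>, so \<open>L\<close> does not increase, which is
  the claim whenever \<open>\<theta> t > 0\<close>.\<close>

lemma increment_le_if_small_increments_le:
  fixes f :: "real \<Rightarrow> real"
  assumes "\<delta> > 0" "a \<le> b"
    and small: "\<And>x y. a \<le> x \<Longrightarrow> x \<le> y \<Longrightarrow> y \<le> b \<Longrightarrow> y - x < \<delta> \<Longrightarrow> f y - f x \<le> K * (y - x)"
  shows "f b - f a \<le> K * (b - a)"
proof -
  define N where "N = nat \<lceil>(b - a) / \<delta>\<rceil> + 1"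
  define h where "h = (b - a) / N"
  have "N > 0" unfolding N_def by simp
  have "h \<ge> 0" using \<open>a \<le> b\<close> unfolding h_def by simp
  have "(b - a) / \<delta> < N" unfolding N_def by linarith
  then have "h < \<delta>" using \<open>N > 0\<close> \<open>\<delta> > 0\<close> unfolding h_def by (simp add: field_simps)
  have "f (a + k * h) - f a \<le> K * (k * h)" if "k \<le> N" for k
    using that
  proof (induction k)
    case 0
    then show ?case by simp
  next
    case (Suc k)
    have "a + Suc k * h \<le> a + N * h"
      using Suc.prems \<open>h \<ge> 0\<close> by (simp add: mult_right_mono)
    also have "\<dots> = b" using \<open>N > 0\<close> unfolding h_def by simp
    finally have "f (a + Suc k * h) - f (a + k * h) \<le> K * (Suc k * h - k * h)"
      using small[of "a + k * h" "a + Suc k * h"] \<open>h \<ge> 0\<close> \<open>h < \<delta>\<close> by (simp add: algebra_simps)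
    with Suc show ?case by (simp add: algebra_simps)
  qed
  from this[of N] show ?thesis using \<open>N > 0\<close> unfolding h_def by simp
qed

lemma le_if_small_increments_le_epsilon:
  fixes f :: "real \<Rightarrow> real"
  assumes "a \<le> b"
    and small: "\<And>\<epsilon>. \<epsilon> > 0 \<Longrightarrow> \<exists>\<delta>>0. \<forall>x y. a \<le> x \<and> x \<le> y \<and> y \<le> b \<and> y - x < \<delta> \<longrightarrow>
                   f y - f x \<le> \<epsilon> * (y - x)"
  shows "f b \<le> f a"
proof (cases "a = b")
  case False
  with \<open>a \<le> b\<close> have "b - a > 0" by simp
  show ?thesis
  proof (rule field_le_epsilon)
    fix \<epsilon> :: real
    assume "\<epsilon> > 0"
    with \<open>b - a > 0\<close> have "\<epsilon> / (b - a) > 0" by simp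
    obtain \<delta> where "\<delta> > 0" and
      step: "\<forall>x y. a \<le> x \<and> x \<le> y \<and> y \<le> b \<and> y - x < \<delta> \<longrightarrow>
        f y - f x \<le> \<epsilon> / (b - a) * (y - x)"
      using small[OF \<open>\<epsilon> / (b - a) > 0\<close>] by blast
    have "f b - f a \<le> \<epsilon> / (b - a) * (b - a)"
      by (rule increment_le_if_small_increments_le[OF \<open>\<delta> > 0\<close> \<open>a \<le> b\<close>]) (use step in blast)
    with \<open>b - a > 0\<close> show "f b \<le> f a + \<epsilon>" by simp
  qed
qed simp

lemma ln_diff_add_le_of_power_decay:
  fixes a b k \<eta> :: real
  assumes "a > 0" "b > 0" "k \<ge> 0"
    and decay: "a ^ n * (b - a) \<le> - k * b ^ Suc n"
    and ratio: "1 - \<eta> \<le> (b / a) ^ Suc n"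
  shows "ln b - ln a + k \<le> \<eta> * k"
proof -
  have "ln b - ln a \<le> (b - a) / a"
    using \<open>b > 0\<close> \<open>a > 0\<close> by (rule ln_diff_le)
  also have "\<dots> = a ^ n * (b - a) / a ^ Suc n"
    using \<open>a > 0\<close> by simp
  also have "\<dots> \<le> - k * b ^ Suc n / a ^ Suc n"
    using decay \<open>a > 0\<close> by (intro divide_right_mono) auto
  also have "\<dots> = - k * (b / a) ^ Suc n"
    by (simp add: power_divide)
  also have "\<dots> \<le> - k * (1 - \<eta>)"
    using mult_left_mono[OF ratio \<open>k \<ge> 0\<close>] by simp
  finally show ?thesis by (simp add: algebra_simps)
qed

lemma uniformly_continuous_ratio_ge:
  fixes f :: "'a::metric_space \<Rightarrow> real"
  assumes "uniformly_continuous_on S f" "\<mu> > 0" "\<And>x. x \<in> S \<Longrightarrow> \<mu> \<le> f x" "\<epsilon> > 0"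
  obtains \<delta> where "\<delta> > 0" "\<And>x y. x \<in> S \<Longrightarrow> y \<in> S \<Longrightarrow> dist y x < \<delta> \<Longrightarrow> 1 - \<epsilon> \<le> f y / f x"
proof -
  have "\<epsilon> * \<mu> > 0" using assms(2,4) by simp
  then obtain \<delta> where "\<delta> > 0" and
    close: "\<forall>x\<in>S. \<forall>y\<in>S. dist y x < \<delta> \<longrightarrow> dist (f y) (f x) < \<epsilon> * \<mu>"
    using assms(1)[unfolded uniformly_continuous_on_def, rule_format, of "\<epsilon> * \<mu>"] by blast
  have "1 - \<epsilon> \<le> f y / f x" if "x \<in> S" "y \<in> S" "dist y x < \<delta>" for x y
  proof -
    have "\<bar>f y - f x\<bar> < \<epsilon> * \<mu>" using close that by (simp add: dist_real_def)
    then have "f x - f y < \<epsilon> * \<mu>" by linarith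
    also have "\<dots> \<le> \<epsilon> * f x" using assms(3,4) \<open>x \<in> S\<close> by simp
    finally have "(1 - \<epsilon>) * f x \<le> f y" by (simp add: algebra_simps)
    moreover have "f x > 0" using assms(2,3) \<open>x \<in> S\<close> by (meson less_le_trans)
    ultimately show ?thesis by (simp add: pos_le_divide_eq)
  qed
  with \<open>\<delta> > 0\<close> show thesis by (rule that)
qed

lemma small_increments_ln_add_linear_of_power_decay:
  fixes \<theta> :: "real \<Rightarrow> real" and n :: nat
  assumes "0 \<le> t" "c > 0" "\<epsilon> > 0"
    and cont: "continuous_on {0..t} \<theta>"
    and pos: "\<And>s. s \<in> {0..t} \<Longrightarrow> \<theta> s > 0"
    and decay: "\<And>t\<^sub>1 t\<^sub>2. 0 \<le> t\<^sub>1 \<Longrightarrow> t\<^sub>1 \<le> t\<^sub>2 \<Longrightarrow> t\<^sub>2 \<le> t \<Longrightarrow>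
                  \<theta> t\<^sub>1 ^ n * (\<theta> t\<^sub>2 - \<theta> t\<^sub>1) \<le> - c * (t\<^sub>2 - t\<^sub>1) * \<theta> t\<^sub>2 ^ Suc n"
  shows "\<exists>\<delta>>0. \<forall>x y. 0 \<le> x \<and> x \<le> y \<and> y \<le> t \<and> y - x < \<delta> \<longrightarrow>
           ln (\<theta> y) + c * y - (ln (\<theta> x) + c * x) \<le> \<epsilon> * (y - x)"
proof -
  have "\<theta> t ^ Suc n \<le> \<theta> s ^ Suc n" if "s \<in> {0..t}" for s
  proof -
    have "0 \<le> c * (t - s) * \<theta> t ^ Suc n"
      using that \<open>c > 0\<close> pos[of t] \<open>0 \<le> t\<close> by simp
    then have "\<theta> s ^ n * (\<theta> t - \<theta> s) \<le> 0"
      using decay[of s t] that by simp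
    moreover have "\<theta> s ^ n > 0" using pos[OF that] by simp
    ultimately have "\<theta> t \<le> \<theta> s" by (simp add: mult_le_0_iff)
    then show ?thesis using pos[of t] \<open>0 \<le> t\<close> by (intro power_mono) auto
  qed
  moreover have "uniformly_continuous_on {0..t} (\<lambda>s. \<theta> s ^ Suc n)"
    by (intro compact_uniformly_continuous continuous_intros cont) simp
  moreover have "\<theta> t ^ Suc n > 0" using pos[of t] \<open>0 \<le> t\<close> by simp
  moreover have "\<epsilon> / c > 0" using \<open>\<epsilon> > 0\<close> \<open>c > 0\<close> by simp
  ultimately obtain \<delta> where "\<delta> > 0" and ratio:
    "\<And>x y. x \<in> {0..t} \<Longrightarrow> y \<in> {0..t} \<Longrightarrow> dist y x < \<delta> \<Longrightarrow> 1 - \<epsilon> / c \<le> \<theta> y ^ Suc n / \<theta> x ^ Suc n"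
    using uniformly_continuous_ratio_ge by metis
  have "ln (\<theta> y) + c * y - (ln (\<theta> x) + c * x) \<le> \<epsilon> * (y - x)"
    if "0 \<le> x" "x \<le> y" "y \<le> t" "y - x < \<delta>" for x y
  proof -
    have "ln (\<theta> y) - ln (\<theta> x) + c * (y - x) \<le> \<epsilon> / c * (c * (y - x))"
    proof (rule ln_diff_add_le_of_power_decay)
      show "\<theta> x ^ n * (\<theta> y - \<theta> x) \<le> - (c * (y - x)) * \<theta> y ^ Suc n"
        using decay[OF that(1-3)] by simp
      show "1 - \<epsilon> / c \<le> (\<theta> y / \<theta> x) ^ Suc n"
        using ratio[of x y] that by (simp add: dist_real_def power_divide)
    qed (use that pos \<open>c > 0\<close> in auto)
    then show ?thesis
      using \<open>c > 0\<close> by (simp add: algebra_simps)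
  qed
  with \<open>\<delta> > 0\<close> show ?thesis by blast
qed

lemma exponential_decay_of_power_decay:
  fixes \<theta> :: "real \<Rightarrow> real" and n :: nat
  assumes "0 \<le> t" "c > 0"
    and cont: "continuous_on {0..t} \<theta>"
    and pos: "\<And>s. s \<in> {0..t} \<Longrightarrow> \<theta> s > 0"
    and decay: "\<And>t\<^sub>1 t\<^sub>2. 0 \<le> t\<^sub>1 \<Longrightarrow> t\<^sub>1 \<le> t\<^sub>2 \<Longrightarrow> t\<^sub>2 \<le> t \<Longrightarrow>
                  \<theta> t\<^sub>1 ^ n * (\<theta> t\<^sub>2 - \<theta> t\<^sub>1) \<le> - c * (t\<^sub>2 - t\<^sub>1) * \<theta> t\<^sub>2 ^ Suc n"
  shows "\<theta> t \<le> exp (- c * t) * \<theta> 0"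
proof -
  have "ln (\<theta> t) + c * t \<le> ln (\<theta> 0) + c * 0"
    using small_increments_ln_add_linear_of_power_decay[OF \<open>0 \<le> t\<close> \<open>c > 0\<close> _ cont pos decay]
    by (rule le_if_small_increments_le_epsilon[OF \<open>0 \<le> t\<close>])
  then have "ln (\<theta> t) \<le> ln (exp (- c * t) * \<theta> 0)"
    using pos[of 0] \<open>0 \<le> t\<close> by (simp add: ln_mult)
  moreover have "\<theta> t > 0" "exp (- c * t) * \<theta> 0 > 0"
    using pos[of t] pos[of 0] \<open>0 \<le> t\<close> by auto
  ultimately show ?thesis by simp
qed

theorem lemma8p2:
  fixes \<theta> :: "real \<Rightarrow> real" and T c :: real and m :: nat
  assumes "T > 0"
    and "continuous_on {0..T} \<theta>"
    and "\<forall>t\<in>{0..T}. \<theta> t \<ge> 0"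
    and "antimono_on {0..T} \<theta>"
    and "m \<ge> 1"
    and "c > 0"
    and "\<forall>t1 t2. 0 \<le> t1 \<and> t1 \<le> t2 \<and> t2 \<le> T \<longrightarrow>
           \<theta> t1 ^ (2*m - 1) * (\<theta> t2 - \<theta> t1) \<le> - c * (t2 - t1) * \<theta> t2 ^ (2*m)"
  shows "\<forall>t\<in>{0..T}. \<theta> t \<le> exp (- c * t) * \<theta> 0"
proof
  fix t assume t: "t \<in> {0..T}"
  show "\<theta> t \<le> exp (- c * t) * \<theta> 0"
  proof (cases "\<theta> t = 0")
    case True
    then show ?thesis using assms(1,3) by simp
  next
    case False
    with assms(3) t have "\<theta> t > 0" by force
    have "\<theta> t \<le> \<theta> s" if "s \<in> {0..t}" for s
      using assms(4) that t by (auto simp: monotone_on_def)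
    with \<open>\<theta> t > 0\<close> have pos: "\<theta> s > 0" if "s \<in> {0..t}" for s
      using that by force
    have "Suc (2*m - 1) = 2*m" using assms(5) by simp
    then have decay: "\<theta> t\<^sub>1 ^ (2*m - 1) * (\<theta> t\<^sub>2 - \<theta> t\<^sub>1) \<le> - c * (t\<^sub>2 - t\<^sub>1) * \<theta> t\<^sub>2 ^ Suc (2*m - 1)"
      if "0 \<le> t\<^sub>1" "t\<^sub>1 \<le> t\<^sub>2" "t\<^sub>2 \<le> t" for t\<^sub>1 t\<^sub>2
      using assms(7) that t by auto
    have "continuous_on {0..t} \<theta>"
      using t by (intro continuous_on_subset[OF assms(2)]) auto
    with t assms(6) pos decay show ?thesis
      by (intro exponential_decay_of_power_decay) auto
  qed
qed

end
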